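(* Let $T$ be a tree. Then for every dominating set $S$ of $T$, $|a(S)|\ge 2\gamma(T)-|S|$.
   Context: A dominating set of a graph $G=(V,E)$ is a set $S\subseteq V$ such that every vertex is in $S$ or adjacent to a vertex of $S$. $\gamma(T)$ denotes the domination number (minimum size of a dominating set). For a dominating set $S$, $a(S)=\{v\in S: S\setminus\{v\}\text{ is not a dominating set}\}$ is the set of critical vertices of $S$. *)

theory Defs
  imports Main
begin

definition simple_graph :: "'a set \<Rightarrow> ('a \<Rightarrow> 'a \<Rightarrow> bool) \<Rightarrow> bool" where
  "simple_graph V E \<longleftrightarrow> finite V \<and> (\<forall>u v. E u v \<longrightarrow> E v u)
     \<and> (\<forall>v. \<not> E v v) \<and> (\<forall>u v. E u v \<longrightarrow> u \<in> V \<and> v \<in> V)"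

definition is_walk :: "('a \<Rightarrow> 'a \<Rightarrow> bool) \<Rightarrow> 'a list \<Rightarrow> bool" where
  "is_walk E xs \<longleftrightarrow> xs \<noteq> [] \<and> (\<forall>i. Suc i < length xs \<longrightarrow> E (xs ! i) (xs ! Suc i))"

definition connected_graph :: "'a set \<Rightarrow> ('a \<Rightarrow> 'a \<Rightarrow> bool) \<Rightarrow> bool" where
  "connected_graph V E \<longleftrightarrow> V \<noteq> {} \<and>
     (\<forall>u\<in>V. \<forall>v\<in>V. \<exists>xs. is_walk E xs \<and> hd xs = u \<and> last xs = v)"

definition is_cycle :: "('a \<Rightarrow> 'a \<Rightarrow> bool) \<Rightarrow> 'a list \<Rightarrow> bool" where
  "is_cycle E xs \<longleftrightarrow> length xs \<ge> 3 \<and> distinct xs \<and> is_walk E xs \<and> E (last xs) (hd xs)"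

definition tree :: "'a set \<Rightarrow> ('a \<Rightarrow> 'a \<Rightarrow> bool) \<Rightarrow> bool" where
  "tree V E \<longleftrightarrow> simple_graph V E \<and> connected_graph V E \<and> (\<nexists>xs. is_cycle E xs)"

definition dominating_set :: "'a set \<Rightarrow> ('a \<Rightarrow> 'a \<Rightarrow> bool) \<Rightarrow> 'a set \<Rightarrow> bool" where
  "dominating_set V E S \<longleftrightarrow> S \<subseteq> V \<and> (\<forall>v\<in>V. v \<in> S \<or> (\<exists>u\<in>S. E v u))"

definition domination_number :: "'a set \<Rightarrow> ('a \<Rightarrow> 'a \<Rightarrow> bool) \<Rightarrow> nat" where
  "domination_number V E = (LEAST k. \<exists>S. dominating_set V E S \<and> card S = k)"

definition critical_vertices :: "'a set \<Rightarrow> ('a \<Rightarrow> 'a \<Rightarrow> bool) \<Rightarrow> 'a set \<Rightarrow> 'a set" where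
  "critical_vertices V E S = {v\<in>S. \<not> dominating_set V E (S - {v})}"

end

theory Submission
  imports Defs
begin

(* Let A = a(S) and let B = S - A be the redundant vertices of S. In a forest, B can be
   2-coloured so that adjacent vertices of B get different colours and every vertex outside B
   with two neighbours in B sees both colours (delete a leaf and extend the colouring).
   Then A together with either colour class still dominates: a vertex of B of the other colour
   is dominated by S minus itself, hence by A or by a neighbour of the opposite colour; a vertex
   outside S has a neighbour in A or two neighbours in B. So 2 gamma <= 2 |A| + |B| = |A| + |S|. *)

lemma is_walk_snoc: "is_walk E xs \<Longrightarrow> E (last xs) a \<Longrightarrow> is_walk E (xs @ [a])"
  unfolding is_walk_def
  by (auto simp: nth_append last_conv_nth less_Suc_eq dest: sym[of "Suc _"])

lemma is_walk_drop: "is_walk E xs \<Longrightarrow> i < length xs \<Longrightarrow> is_walk E (drop i xs)"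
  unfolding is_walk_def by auto

lemma is_cycle_mono: "is_cycle E' xs \<Longrightarrow> (\<And>a b. E' a b \<Longrightarrow> E a b) \<Longrightarrow> is_cycle E xs"
  unfolding is_cycle_def is_walk_def by blast

lemma simple_graph_delete_vertex:
  "simple_graph V E \<Longrightarrow> simple_graph (V - {v}) (\<lambda>a b. E a b \<and> a \<noteq> v \<and> b \<noteq> v)"
  unfolding simple_graph_def by blast

lemma acyclic_path_last_neighbour:
  assumes "\<nexists>ys. is_cycle E ys" and "\<forall>v. \<not> E v v"
    and "is_walk E xs" and "distinct xs" and "E (last xs) a" and "a \<in> set xs"
  shows "a = xs ! (length xs - 2)"
proof -
  obtain i where i: "i < length xs" "xs ! i = a"
    using assms(6) by (auto simp: in_set_conv_nth)
  have "xs \<noteq> []" using assms(6) by auto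
  then have "i \<noteq> length xs - 1"
    using assms(2,5) i by (metis last_conv_nth)
  moreover have "\<not> i + 3 \<le> length xs"
  proof
    assume "i + 3 \<le> length xs"
    then have "is_cycle E (drop i xs)"
      unfolding is_cycle_def
      using i assms(4,5) is_walk_drop[OF assms(3) i(1)] by (simp add: hd_drop_conv_nth)
    then show False using assms(1) by blast
  qed
  ultimately have "i = length xs - 2" using i(1) by linarith
  then show ?thesis using i(2) by simp
qed

lemma acyclic_graph_has_leaf:
  assumes G: "simple_graph V E" and acyclic: "\<nexists>xs. is_cycle E xs" and "V \<noteq> {}"
  shows "\<exists>v\<in>V. \<forall>a b. E v a \<longrightarrow> E v b \<longrightarrow> a = b"
proof -
  define path where "path xs \<longleftrightarrow> is_walk E xs \<and> distinct xs \<and> set xs \<subseteq> V" for xs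
  obtain v0 where "v0 \<in> V" using \<open>V \<noteq> {}\<close> by blast
  then have "path [v0]" unfolding path_def is_walk_def by simp
  moreover have "length xs < Suc (card V)" if "path xs" for xs
    using that G card_mono[of V "set xs"] distinct_card[of xs]
    unfolding path_def simple_graph_def by simp
  ultimately obtain xs where xs: "path xs" and longest: "\<And>ys. path ys \<Longrightarrow> length ys \<le> length xs"
    using ex_has_greatest_nat[of path] by blast
  have "xs \<noteq> []" using xs unfolding path_def is_walk_def by simp
  then have "last xs \<in> V" using xs unfolding path_def by auto
  moreover have "a = xs ! (length xs - 2)" if "E (last xs) a" for a
  proof -
    have "a \<in> set xs"
    proof (rule ccontr)
      assume "a \<notin> set xs"
      then have "path (xs @ [a])"
        using xs that G is_walk_snoc unfolding path_def simple_graph_def by auto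
      then show False using longest by fastforce
    qed
    then show ?thesis
      using acyclic_path_last_neighbour[OF acyclic _ _ _ that] xs G
      unfolding path_def simple_graph_def by blast
  qed
  ultimately show ?thesis by blast
qed

definition splitting_coloring :: "('a \<Rightarrow> 'a \<Rightarrow> bool) \<Rightarrow> 'a set \<Rightarrow> ('a \<Rightarrow> bool) \<Rightarrow> bool" where
  "splitting_coloring E B col \<longleftrightarrow>
     (\<forall>b\<in>B. \<forall>b'\<in>B. E b b' \<longrightarrow> col b \<noteq> col b') \<and>
     (\<forall>x. x \<notin> B \<longrightarrow> (\<exists>b1\<in>B. \<exists>b2\<in>B. b1 \<noteq> b2 \<and> E x b1 \<and> E x b2) \<longrightarrow>
        (\<forall>c. \<exists>b\<in>B. E x b \<and> col b = c))"

lemma splitting_coloring_extend_leaf: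
  assumes G: "simple_graph V E"
    and leaf: "\<forall>a b. E v a \<longrightarrow> E v b \<longrightarrow> a = b"
    and col': "splitting_coloring (\<lambda>a b. E a b \<and> a \<noteq> v \<and> b \<noteq> v) B col'"
  shows "\<exists>col. splitting_coloring E B col"
proof -
  (* The colour of v must differ from its neighbour u if u is in B, and otherwise from some
     other neighbour w of u in B, so that u sees both colours. If v is isolated, u is junk
     and nothing is constrained. *)
  define u where "u = (SOME u. E v u)"
  define w where "w = (if u \<in> B then u else SOME w. w \<in> B \<and> w \<noteq> v \<and> E u w)"
  define col where "col = col'(v := \<not> col' w)"
  have sym: "E a b \<Longrightarrow> E b a" and irrefl: "\<not> E a a" for a b
    using G unfolding simple_graph_def by blast+
  have nbr_v: "a = u" if "E v a \<or> E a v" for a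
    using that leaf sym someI[of "E v" a] unfolding u_def by blast
  then have u_ne_v: "u \<noteq> v" if "E v a" for a
    using that irrefl by blast
  have proper: "col b \<noteq> col b'" if "b \<in> B" "b' \<in> B" "E b b'" for b b'
  proof -
    consider "b = v" | "b' = v" | "b \<noteq> v" "b' \<noteq> v" by blast
    then show ?thesis
    proof cases
      case 1
      then have "b' = u" "u \<noteq> v" using that nbr_v u_ne_v by blast+
      then show ?thesis using 1 that unfolding col_def w_def by simp
    next
      case 2
      then have "b = u" "u \<noteq> v" using that nbr_v u_ne_v sym by blast+
      then show ?thesis using 2 that unfolding col_def w_def by simp
    next
      case 3
      then show ?thesis using that col' unfolding col_def splitting_coloring_def by simp
    qed
  qed
  have sees_both_colors: "\<exists>b\<in>B. E x b \<and> col b = c"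
    if x: "x \<notin> B" "b1 \<in> B" "b2 \<in> B" "b1 \<noteq> b2" "E x b1" "E x b2" for x b1 b2 c
  proof (cases "E x v \<and> v \<in> B")
    case True
    then have "x = u" using nbr_v by blast
    then have "u \<notin> B" using x(1) by simp
    obtain b where "b \<in> B" "b \<noteq> v" "E u b" using x \<open>x = u\<close> by blast
    then have w: "w \<in> B" "w \<noteq> v" "E u w"
      using someI[of "\<lambda>w. w \<in> B \<and> w \<noteq> v \<and> E u w" b] \<open>u \<notin> B\<close>
      unfolding w_def by simp_all
    then have "col v = (\<not> col w)" unfolding col_def by simp
    then show ?thesis using True w \<open>x = u\<close> by (cases "col w = c") auto
  next
    case False
    have "x \<noteq> v" using that leaf by blast
    moreover have "b1 \<noteq> v" "b2 \<noteq> v" using False that by blast+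
    ultimately obtain b where "b \<in> B" "E x b" "b \<noteq> v" "col' b = c"
      using col' x unfolding splitting_coloring_def by blast
    then show ?thesis unfolding col_def by auto
  qed
  have "splitting_coloring E B col"
    unfolding splitting_coloring_def using proper sees_both_colors by blast
  then show ?thesis by blast
qed

lemma acyclic_graph_has_splitting_coloring:
  assumes "simple_graph V E" and "\<nexists>xs. is_cycle E xs"
  shows "\<exists>col. splitting_coloring E B col"
  using assms
proof (induction "card V" arbitrary: V E rule: less_induct)
  case less
  show ?case
  proof (cases "V = {}")
    case True
    then have "\<not> E a b" for a b using less.prems(1) unfolding simple_graph_def by blast
    then show ?thesis unfolding splitting_coloring_def by simp
  next
    case False
    then obtain v where "v \<in> V" and leaf: "\<forall>a b. E v a \<longrightarrow> E v b \<longrightarrow> a = b"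
      using acyclic_graph_has_leaf[OF less.prems False] by blast
    let ?E' = "\<lambda>a b. E a b \<and> a \<noteq> v \<and> b \<noteq> v"
    have "finite V" using less.prems(1) unfolding simple_graph_def by blast
    then have "card (V - {v}) < card V" using \<open>v \<in> V\<close> by (rule card_Diff1_less)
    moreover have "simple_graph (V - {v}) ?E'"
      using less.prems(1) by (rule simple_graph_delete_vertex)
    moreover have "\<nexists>xs. is_cycle ?E' xs"
      using less.prems(2) is_cycle_mono[of ?E' _ E] by blast
    ultimately obtain col' where "splitting_coloring ?E' B col'"
      using less.hyps by blast
    then show ?thesis
      using splitting_coloring_extend_leaf[OF less.prems(1) leaf] by blast
  qed
qed

lemma dominating_set_critical_Un_color_class:
  assumes S: "dominating_set V E S"
    and col: "splitting_coloring E (S - critical_vertices V E S) col"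
  shows "dominating_set V E
           (critical_vertices V E S \<union> {b \<in> S - critical_vertices V E S. col b = c})"
proof -
  define A where "A = critical_vertices V E S"
  define B where "B = S - A"
  define D where "D = A \<union> {b \<in> B. col b = c}"
  have "A \<subseteq> S" unfolding A_def critical_vertices_def by blast
  have redundant: "\<exists>u\<in>S - {b}. E x u" if "b \<in> B" "x \<in> V" "x \<notin> S - {b}" for b x
    using that unfolding B_def A_def critical_vertices_def dominating_set_def by blast
  have "x \<in> D \<or> (\<exists>u\<in>D. E x u)" if "x \<in> V" for x
  proof (cases "x \<in> D \<or> (\<exists>u\<in>A. E x u)")
    case True
    then show ?thesis unfolding D_def by blast
  next
    case False
    then have in_B: "u \<in> B" if "u \<in> S" "E x u" for u
      using that unfolding B_def by blast
    consider "x \<in> B" | "x \<notin> S"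
      using False \<open>A \<subseteq> S\<close> unfolding B_def D_def by blast
    then show ?thesis
    proof cases
      case 1
      then have "col x \<noteq> c" using False unfolding D_def by blast
      obtain u where "u \<in> S - {x}" "E x u" using redundant[OF 1 \<open>x \<in> V\<close>] by blast
      then have "u \<in> B" "col u \<noteq> col x"
        using in_B 1 col unfolding splitting_coloring_def B_def A_def by blast+
      then show ?thesis using \<open>E x u\<close> \<open>col x \<noteq> c\<close> unfolding D_def by blast
    next
      case 2
      obtain u where "u \<in> S" "E x u" using S 2 \<open>x \<in> V\<close> unfolding dominating_set_def by blast
      moreover obtain u' where "u' \<in> S - {u}" "E x u'"
        using redundant[OF in_B] \<open>u \<in> S\<close> \<open>E x u\<close> \<open>x \<in> V\<close> 2 by blast
      ultimately obtain b where "b \<in> B" "E x b" "col b = c"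
        using col 2 in_B unfolding splitting_coloring_def B_def A_def by blast
      then show ?thesis unfolding D_def by blast
    qed
  qed
  moreover have "D \<subseteq> V"
    using S \<open>A \<subseteq> S\<close> unfolding D_def B_def dominating_set_def by blast
  ultimately show ?thesis unfolding dominating_set_def D_def B_def A_def by blast
qed

lemma domination_number_le_card: "dominating_set V E D \<Longrightarrow> domination_number V E \<le> card D"
  unfolding domination_number_def by (rule Least_le) blast

lemma two_domination_number_le_via_splitting_coloring:
  assumes "finite S" and S: "dominating_set V E S"
    and col: "splitting_coloring E (S - critical_vertices V E S) col"
  shows "2 * domination_number V E \<le> card (critical_vertices V E S) + card S"
proof -
  define A where "A = critical_vertices V E S"
  define B where "B = S - A"
  have "A \<subseteq> S" unfolding A_def critical_vertices_def by blast
  then have "finite A" "finite B" using \<open>finite S\<close> finite_subset unfolding B_def by blast+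
  then have "card (A \<union> {b \<in> B. col b = c}) = card A + card {b \<in> B. col b = c}" for c
    unfolding B_def by (intro card_Un_disjoint) auto
  then have class_bound: "domination_number V E \<le> card A + card {b \<in> B. col b = c}" for c
    using domination_number_le_card dominating_set_critical_Un_color_class[OF S col]
    unfolding A_def B_def by metis
  have "card S = card A + card B"
    using card_Int_Diff[OF \<open>finite S\<close>, of A] \<open>A \<subseteq> S\<close> unfolding B_def by (simp add: Int_absorb1)
  moreover have "card B = card {b \<in> B. col b = True} + card {b \<in> B. col b = False}"
    using card_Int_Diff[OF \<open>finite B\<close>, of "{b. col b}"] by (simp add: Int_def set_diff_eq)
  ultimately show ?thesis
    using class_bound[of True] class_bound[of False] unfolding A_def by linarith
qed

theorem lemma3p4:
  fixes V :: "'a set" and E :: "'a \<Rightarrow> 'a \<Rightarrow> bool" and S :: "'a set"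
  assumes "tree V E"
    and "dominating_set V E S"
  shows "int (card (critical_vertices V E S)) \<ge> 2 * int (domination_number V E) - int (card S)"
proof -
  have G: "simple_graph V E" and acyclic: "\<nexists>xs. is_cycle E xs"
    using assms(1) unfolding tree_def by blast+
  then obtain col where col: "splitting_coloring E (S - critical_vertices V E S) col"
    using acyclic_graph_has_splitting_coloring by blast
  have "finite S"
    using G assms(2) finite_subset unfolding simple_graph_def dominating_set_def by blast
  then have "2 * domination_number V E \<le> card (critical_vertices V E S) + card S"
    using two_domination_number_le_via_splitting_coloring[OF _ assms(2) col] by blast
  then show ?thesis by linarith
qed

end
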